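(* Let $\mathcal{T}=[0,T_{max}]$, $\mathcal{T}_d,\mathcal{T}_a\subseteq\mathcal{T}$ compact, $\mathcal{X}=[X_{min},X_{max}]$ with $0\le X_{min}<X_{max}$, $m$ a probability measure on $\mathcal{X}\times\mathcal{T}_a$, $G>0$, and let $V:\mathbb{R}^+\to\mathbb{R}^+$ be a strictly decreasing Lipschitz continuous speed function. For $E\in\mathcal{M}_{m,G}$ let $z_{\mathcal{F}(E)}$ denote the unique $z\in\mathcal{C}(\mathcal{T})$ with $z(t)=\int_0^t V\big(\mathcal{F}(E)(S_s(z))\big)\,ds$ for all $t\in\mathcal{T}$. Then the map $E\mapsto z_{\mathcal{F}(E)}$ is continuous from $\mathcal{M}_{m,G}$ (with the weak convergence topology) to $\mathcal{C}(\mathcal{T})$ (with the uniform norm): if $E_k,E\in\mathcal{M}_{m,G}$ and $E_k\Rightarrow E$ weakly, then $z_{\mathcal{F}(E_k)}\to z_{\mathcal{F}(E)}$ uniformly.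
   Context: $\mathcal{C}(\mathcal{T})$ denotes the space of real-valued continuous functions on $\mathcal{T}$. $\lambda_2$ denotes Lebesgue measure on $\mathbb{R}^2$. $\mathcal{P}_{m,G}$ is the set of all Borel probability measures $F$ on $\mathcal{T}_d\times\mathcal{X}$ such that (i) $F(B)\le G\,\lambda_2(B)$ for every Borel $B\subseteq\mathcal{T}_d\times\mathcal{X}$, and (ii) $F(\mathcal{T}_d\times B)=m(B\times\mathcal{T}_a)$ for every Borel $B\subseteq\mathcal{X}$. For a Borel probability measure $E$ on $\mathcal{T}_d\times\mathcal{X}\times\mathcal{T}_a$ (a "dis-aggregated in-flow measure", i.e. the joint law of departure time, trip length and desired arrival time), $\mathcal{F}(E)$ is its marginal on $\mathcal{T}_d\times\mathcal{X}$: $\mathcal{F}(E)(B)=E(B\times\mathcal{T}_a)$. $\mathcal{M}_{m,G}$ is the set of such $E$ whose marginal on $\mathcal{X}\times\mathcal{T}_a$ equals $m$ and with $\mathcal{F}(E)\in\mathcal{P}_{m,G}$. For $z\in\mathcal{C}(\mathcal{T})$, $S_t(z):=\{(\tau,\xi)\,:\,\tau\in[0,t]\cap\mathcal{T}_d,\ \xi\in(z(t)-z(\tau),\infty)\cap\mathcal{X}\}$. *)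

theory Defs
  imports "HOL-Probability.Probability"
begin

definition weak_conv_seq :: "(nat \<Rightarrow> 'a::metric_space measure) \<Rightarrow> 'a measure \<Rightarrow> bool" where
  "weak_conv_seq Ms M \<longleftrightarrow>
     (\<forall>f :: 'a \<Rightarrow> real. continuous_on UNIV f \<and> bounded (range f) \<longrightarrow>
        (\<lambda>k. integral\<^sup>L (Ms k) f) \<longlonglongrightarrow> integral\<^sup>L M f)"

text \<open>Marginal on departure time and trip length: F(E).\<close>
definition inflow_marg :: "(real \<times> real \<times> real) measure \<Rightarrow> (real \<times> real) measure" where
  "inflow_marg E = distr E borel (\<lambda>(\<tau>, \<xi>, a). (\<tau>, \<xi>))"

text \<open>Marginal on trip length and desired arrival time.\<close>
definition demand_marg :: "(real \<times> real \<times> real) measure \<Rightarrow> (real \<times> real) measure" where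
  "demand_marg E = distr E borel (\<lambda>(\<tau>, \<xi>, a). (\<xi>, a))"

definition P_mG :: "real set \<Rightarrow> real set \<Rightarrow> real set \<Rightarrow> (real \<times> real) measure \<Rightarrow> real
    \<Rightarrow> (real \<times> real) measure set" where
  "P_mG Td X Ta m G = {F. prob_space F \<and> sets F = sets borel \<and> emeasure F (Td \<times> X) = 1 \<and>
     (\<forall>B \<in> sets borel. B \<subseteq> Td \<times> X \<longrightarrow> emeasure F B \<le> ennreal G * emeasure lborel B) \<and>
     (\<forall>B \<in> sets borel. B \<subseteq> X \<longrightarrow> emeasure F (Td \<times> B) = emeasure m (B \<times> Ta))}"

definition M_mG :: "real set \<Rightarrow> real set \<Rightarrow> real set \<Rightarrow> (real \<times> real) measure \<Rightarrow> real
    \<Rightarrow> (real \<times> real \<times> real) measure set" where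
  "M_mG Td X Ta m G = {E. prob_space E \<and> sets E = sets borel \<and> emeasure E (Td \<times> X \<times> Ta) = 1 \<and>
     demand_marg E = m \<and> inflow_marg E \<in> P_mG Td X Ta m G}"

definition S_set :: "real set \<Rightarrow> real set \<Rightarrow> (real \<Rightarrow> real) \<Rightarrow> real \<Rightarrow> (real \<times> real) set" where
  "S_set Td X z t = {(\<tau>, \<xi>). \<tau> \<in> {0..t} \<inter> Td \<and> \<xi> \<in> {z t - z \<tau> <..} \<inter> X}"

text \<open>The unique solution z_F in C(T) (functions on T = [0,Tmax], represented as
  functions on the reals that are continuous on T and vanish outside T).\<close>
definition z_sol :: "real \<Rightarrow> real set \<Rightarrow> real set \<Rightarrow> (real \<Rightarrow> real) \<Rightarrow> (real \<times> real) measure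
    \<Rightarrow> (real \<Rightarrow> real)" where
  "z_sol Tmax Td X V F = (THE z. continuous_on {0..Tmax} z \<and> (\<forall>t. t \<notin> {0..Tmax} \<longrightarrow> z t = 0) \<and>
     (\<forall>t \<in> {0..Tmax}. ((\<lambda>s. V (measure F (S_set Td X z s))) has_integral z t) {0..t}))"

end

theory Submission
  imports Defs
begin

text \<open>
  Write \<open>\<Phi>\<^sub>F z t = \<integral>\<^sub>0\<^sup>t V (F (S\<^sub>s(z))) ds\<close>, so that \<open>z\<^sub>F\<close> is the fixed point of \<open>\<Phi>\<^sub>F\<close>.
  If \<open>F \<le> G \<lambda>\<^sub>2\<close> on its support, then \<open>F (S\<^sub>s(z))\<close> changes by at most \<open>2 G s \<delta>\<close> when \<open>z\<close> is
  moved by \<open>\<delta>\<close> in the supremum norm on \<open>[0, s]\<close>, because the symmetric difference of the two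
  sets lies in a strip of width \<open>2 \<delta>\<close> over \<open>[0, s]\<close>. Hence \<open>\<Phi>\<^sub>F\<close> halves distances in a Bielecki
  norm \<open>sup\<^sub>t e\<^sup>-\<^sup>\<lambda>\<^sup>t |z t|\<close>, which gives existence (Picard iteration) and, applied to two
  inflows at once, the stability estimate
  \<open>|z\<^sub>F\<^sub>' t - z\<^sub>F t| \<le> 2 e\<^sup>\<lambda>\<^sup>t \<integral>\<^sub>0\<^sup>T L |F' (S\<^sub>s(z\<^sub>F)) - F (S\<^sub>s(z\<^sub>F))| ds\<close>,
  of which uniqueness is the case \<open>F' = F\<close>.
  The boundary of \<open>S\<^sub>s(z\<^sub>F)\<close> consists of a graph and a vertical segment, which are null for
  \<open>F\<close>; so by the portmanteau theorem \<open>F\<^sub>k (S\<^sub>s(z\<^sub>F)) \<longrightarrow> F (S\<^sub>s(z\<^sub>F))\<close> for each \<open>s\<close> when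
  \<open>F\<^sub>k \<Rightarrow> F\<close>, and dominated convergence makes the right-hand side vanish.
  Weak convergence of \<open>E\<^sub>k\<close> passes to the marginals \<open>F\<^sub>k\<close> by the continuous mapping theorem.
\<close>

lemma weak_conv_seq_distr:
  fixes g :: "'a::metric_space \<Rightarrow> 'b::metric_space"
  assumes conv: "weak_conv_seq Ms M" and g: "continuous_on UNIV g"
    and sets_Ms: "\<And>k. sets (Ms k) = sets borel" and sets_M: "sets M = sets borel"
  shows "weak_conv_seq (\<lambda>k. distr (Ms k) borel g) (distr M borel g)"
  unfolding weak_conv_seq_def
proof (intro allI impI)
  fix f :: "'b \<Rightarrow> real"
  assume f: "continuous_on UNIV f \<and> bounded (range f)"
  have integral_distr_g: "integral\<^sup>L (distr N borel g) f = integral\<^sup>L N (f \<circ> g)"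
    if "sets N = sets borel" for N
  proof -
    have "g \<in> measurable N borel"
      using borel_measurable_continuous_onI[OF g] measurable_cong_sets[OF that refl] by blast
    then show ?thesis
      using f by (simp add: integral_distr borel_measurable_continuous_onI comp_def)
  qed
  have "continuous_on UNIV (f \<circ> g)"
    using f g by (auto intro: continuous_on_compose2)
  moreover have "bounded (range (f \<circ> g))"
    using f by (auto intro: bounded_subset)
  ultimately show "(\<lambda>k. integral\<^sup>L (distr (Ms k) borel g) f) \<longlonglongrightarrow> integral\<^sup>L (distr M borel g) f"
    using conv by (simp add: weak_conv_seq_def integral_distr_g sets_Ms sets_M)
qed

definition infdist_cutoff :: "'a::metric_space set \<Rightarrow> nat \<Rightarrow> 'a \<Rightarrow> real" where
  "infdist_cutoff C n x = max 0 (1 - real n * infdist x C)"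

lemma continuous_on_infdist_cutoff: "continuous_on UNIV (infdist_cutoff C n)"
  unfolding infdist_cutoff_def by (intro continuous_intros continuous_on_infdist continuous_on_id)

lemma borel_measurable_infdist_cutoff:
  "sets N = sets borel \<Longrightarrow> infdist_cutoff C n \<in> borel_measurable N"
  using borel_measurable_continuous_onI[OF continuous_on_infdist_cutoff] measurable_cong_sets
  by blast

lemma infdist_cutoff_bounds:
  "0 \<le> infdist_cutoff C n x" "infdist_cutoff C n x \<le> 1" "\<bar>infdist_cutoff C n x\<bar> \<le> 1"
  unfolding infdist_cutoff_def using infdist_nonneg[of x C] by auto

lemma indicator_le_infdist_cutoff: "indicator C x \<le> infdist_cutoff C n x"
  using infdist_cutoff_bounds[of C n x] by (simp add: infdist_cutoff_def indicator_def)

lemma infdist_cutoff_tendsto_indicator: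
  fixes C :: "'a::metric_space set"
  assumes "closed C" "C \<noteq> {}"
  shows "(\<lambda>n. infdist_cutoff C n x) \<longlonglongrightarrow> indicator C x"
proof (cases "x \<in> C")
  case True
  then show ?thesis by (simp add: infdist_cutoff_def)
next
  case False
  then have d: "0 < infdist x C"
    using infdist_pos_not_in_closed[OF assms] by simp
  obtain N where N: "1 < real N * infdist x C"
    using ex_less_of_nat_mult[OF d] by blast
  have "real N * infdist x C \<le> real n * infdist x C" if "N \<le> n" for n
    using d that by (intro mult_right_mono) auto
  then have "\<forall>n\<ge>N. infdist_cutoff C n x = indicator C x"
    using N False by (fastforce simp: infdist_cutoff_def)
  then show ?thesis
    by (intro tendsto_eventually) (auto simp: eventually_sequentially)
qed

lemma integral_infdist_cutoff_tendsto:
  assumes M: "prob_space M" and sets_M: "sets M = sets borel" and C: "closed C" "C \<noteq> {}"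
  shows "(\<lambda>n. integral\<^sup>L M (infdist_cutoff C n)) \<longlonglongrightarrow> measure M C"
proof -
  interpret prob_space M by (rule M)
  have "(\<lambda>n. integral\<^sup>L M (infdist_cutoff C n)) \<longlonglongrightarrow> integral\<^sup>L M (indicator C)"
  proof (rule integral_dominated_convergence[where w="\<lambda>_. 1"])
    show "AE x in M. (\<lambda>n. infdist_cutoff C n x) \<longlonglongrightarrow> indicator C x"
      using infdist_cutoff_tendsto_indicator[OF C] by simp
    show "indicator C \<in> borel_measurable M"
      using C sets_M by (intro borel_measurable_indicator) (auto intro: borel_closed)
  qed (auto intro: AE_I2 simp: infdist_cutoff_bounds borel_measurable_infdist_cutoff[OF sets_M])
  then show ?thesis
    using sets_eq_imp_space_eq[OF sets_M] by simp
qed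

lemma measure_le_integral_infdist_cutoff:
  assumes M: "prob_space M" and sets_M: "sets M = sets borel" and C: "closed C"
  shows "measure M C \<le> integral\<^sup>L M (infdist_cutoff C n)"
proof -
  interpret prob_space M by (rule M)
  have "measure M C = integral\<^sup>L M (indicator C)"
    using sets_eq_imp_space_eq[OF sets_M] by simp
  also have "\<dots> \<le> integral\<^sup>L M (infdist_cutoff C n)"
  proof (rule integral_mono)
    show "integrable M (indicator C :: 'a \<Rightarrow> real)"
      using C sets_M by (intro integrable_const_bound[where B=1] borel_measurable_indicator) auto
    show "integrable M (infdist_cutoff C n)"
      using infdist_cutoff_bounds
      by (intro integrable_const_bound[where B=1] borel_measurable_infdist_cutoff[OF sets_M] AE_I2) auto
  qed (rule indicator_le_infdist_cutoff)
  finally show ?thesis .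
qed

lemma weak_conv_seq_closed_upper:
  fixes C :: "'a::metric_space set"
  assumes conv: "weak_conv_seq Ms M"
    and prob_Ms: "\<And>k. prob_space (Ms k)" and sets_Ms: "\<And>k. sets (Ms k) = sets borel"
    and prob_M: "prob_space M" and sets_M: "sets M = sets borel"
    and C: "closed C" and e: "0 < e"
  shows "eventually (\<lambda>k. measure (Ms k) C < measure M C + e) sequentially"
proof (cases "C = {}")
  case True
  then show ?thesis using e by simp
next
  case False
  have "eventually (\<lambda>n. integral\<^sup>L M (infdist_cutoff C n) < measure M C + e / 2) sequentially"
    using e by (intro order_tendstoD(2)[OF integral_infdist_cutoff_tendsto[OF prob_M sets_M C False]]) simp
  then obtain N where N: "integral\<^sup>L M (infdist_cutoff C N) < measure M C + e / 2"
    by (auto simp: eventually_sequentially)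
  have "bounded (range (infdist_cutoff C N))"
    unfolding bounded_real using infdist_cutoff_bounds by (intro exI[of _ 1]) auto
  then have "(\<lambda>k. integral\<^sup>L (Ms k) (infdist_cutoff C N)) \<longlonglongrightarrow> integral\<^sup>L M (infdist_cutoff C N)"
    using conv continuous_on_infdist_cutoff[of C N] unfolding weak_conv_seq_def by blast
  then have "eventually (\<lambda>k. integral\<^sup>L (Ms k) (infdist_cutoff C N) < integral\<^sup>L M (infdist_cutoff C N) + e / 2)
      sequentially"
    by (rule order_tendstoD(2)) (use e in simp)
  then show ?thesis
  proof eventually_elim
    case (elim k)
    then show ?case
      using measure_le_integral_infdist_cutoff[OF prob_Ms sets_Ms C, of k N] N by linarith
  qed
qed

lemma weak_conv_seq_measure_tendsto:
  fixes A :: "'a::metric_space set"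
  assumes conv: "weak_conv_seq Ms M"
    and prob_Ms: "\<And>k. prob_space (Ms k)" and sets_Ms: "\<And>k. sets (Ms k) = sets borel"
    and prob_M: "prob_space M" and sets_M: "sets M = sets borel"
    and U: "open U" "U \<subseteq> A" and C: "closed C" "A \<subseteq> C" and A: "A \<in> sets borel"
    and null_boundary: "measure M C \<le> measure M U"
  shows "(\<lambda>k. measure (Ms k) A) \<longlonglongrightarrow> measure M A"
proof -
  interpret M: prob_space M by (rule prob_M)
  have measure_compl: "measure N (- B) = 1 - measure N B"
    if "prob_space N" "sets N = sets borel" "B \<in> sets borel" for N and B :: "'a set"
    using prob_space.prob_compl[OF that(1), of B] that sets_eq_imp_space_eq[OF that(2)]
    by (simp add: Compl_eq_Diff_UNIV)
  have "measure M A \<le> measure M C" "measure M U \<le> measure M A"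
    using U C A sets_M borel_open borel_closed by (auto intro!: M.finite_measure_mono)
  then have M_A: "measure M C \<le> measure M A" "measure M A \<le> measure M U"
    using null_boundary by linarith+
  show ?thesis
    unfolding tendsto_iff dist_real_def
  proof (intro allI impI)
    fix e :: real assume e: "0 < e"
    have "closed (- U)" using U by auto
    with weak_conv_seq_closed_upper[OF conv prob_Ms sets_Ms prob_M sets_M _ e]
    have "eventually (\<lambda>k. measure (Ms k) C < measure M C + e \<and>
        measure (Ms k) (- U) < measure M (- U) + e) sequentially"
      using C by (auto intro: eventually_conj)
    then show "eventually (\<lambda>k. \<bar>measure (Ms k) A - measure M A\<bar> < e) sequentially"
    proof eventually_elim
      case (elim k)
      interpret Mk: prob_space "Ms k" by (rule prob_Ms)
      have "measure (Ms k) A \<le> measure (Ms k) C" "measure (Ms k) (- A) \<le> measure (Ms k) (- U)"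
        using U C A sets_Ms[of k] borel_open borel_closed by (auto intro!: Mk.finite_measure_mono)
      then show ?case
        using elim M_A A borel_open[OF U(1)] measure_compl[OF prob_Ms sets_Ms]
          measure_compl[OF prob_M sets_M] by (simp add: abs_less_iff)
    qed
  qed
qed

lemma emeasure_lborel_le_strip:
  fixes l :: "real \<Rightarrow> real"
  assumes B: "B \<in> sets borel" and ab: "a \<le> b" and d: "0 \<le> d"
    and strip: "B \<subseteq> {(\<tau>, \<xi>). a \<le> \<tau> \<and> \<tau> \<le> b \<and> l \<tau> \<le> \<xi> \<and> \<xi> \<le> l \<tau> + d}"
  shows "emeasure lborel B \<le> ennreal (d * (b - a))"
proof -
  have "emeasure lborel B = emeasure (lborel \<Otimes>\<^sub>M lborel) B"
    by (simp add: lborel_prod)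
  also have "\<dots> = (\<integral>\<^sup>+x. emeasure lborel (Pair x -` B) \<partial>lborel)"
    by (rule lborel.emeasure_pair_measure_alt) (simp only: lborel_prod, simp add: B)
  also have "\<dots> \<le> (\<integral>\<^sup>+x. ennreal d * indicator {a..b} x \<partial>lborel)"
  proof (rule nn_integral_mono)
    fix x :: real
    show "emeasure lborel (Pair x -` B) \<le> ennreal d * indicator {a..b} x"
    proof (cases "x \<in> {a..b}")
      case True
      have "emeasure lborel (Pair x -` B) \<le> emeasure lborel {l x..l x + d}"
        using strip by (intro emeasure_mono) auto
      then show ?thesis using True d by simp
    next
      case False
      then have "Pair x -` B = {}" using strip by auto
      then show ?thesis by simp
    qed
  qed
  also have "\<dots> = ennreal (d * (b - a))"
    using ab d by (simp add: nn_integral_cmult_indicator ennreal_mult)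
  finally show ?thesis .
qed

lemma closed_supergraph:
  fixes c :: "real \<Rightarrow> real"
  assumes "continuous_on {..s} c"
  shows "closed {x. fst x \<le> s \<and> c (fst x) \<le> snd x}"
proof -
  have "continuous_on ({..s} \<times> UNIV) (\<lambda>x. snd x - c (fst x))"
    by (intro continuous_intros continuous_on_compose2[OF assms]) auto
  moreover have "{x. fst x \<le> s \<and> c (fst x) \<le> snd x} = ({..s} \<times> UNIV) \<inter> (\<lambda>x. snd x - c (fst x)) -` {0..}"
    by auto
  ultimately show ?thesis
    by (metis continuous_closed_preimage closed_Times closed_atMost closed_UNIV closed_atLeast)
qed

lemma open_strict_supergraph:
  fixes c :: "real \<Rightarrow> real"
  assumes "continuous_on {..s} c"
  shows "open {x. fst x < s \<and> c (fst x) < snd x}"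
proof -
  have "continuous_on ({..<s} \<times> UNIV) (\<lambda>x. snd x - c (fst x))"
    by (intro continuous_intros continuous_on_compose2[OF assms]) auto
  moreover have "{x. fst x < s \<and> c (fst x) < snd x} = ({..<s} \<times> UNIV) \<inter> (\<lambda>x. snd x - c (fst x)) -` {0<..}"
    by auto
  ultimately show ?thesis
    by (metis continuous_open_preimage open_Times open_lessThan open_UNIV open_greaterThan)
qed

lemma (in finite_measure) abs_measure_diff_le:
  assumes "A \<in> sets M" "B \<in> sets M" "measure M (A - B) \<le> e" "measure M (B - A) \<le> e"
  shows "\<bar>measure M A - measure M B\<bar> \<le> e"
proof -
  have "measure M X \<le> measure M Y + measure M (X - Y)" if "X \<in> sets M" "Y \<in> sets M" for X Y
  proof -
    have "measure M X \<le> measure M (Y \<union> (X - Y))"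
      using that by (intro finite_measure_mono) auto
    also have "\<dots> \<le> measure M Y + measure M (X - Y)"
      using that by (intro measure_Un_le) auto
    finally show ?thesis .
  qed
  then show ?thesis using assms by (force simp: abs_le_iff)
qed

lemma has_integral_exp_scaled:
  fixes r t :: real
  assumes "r \<noteq> 0" "0 \<le> t"
  shows "((\<lambda>s. exp (r * s)) has_integral (exp (r * t) - 1) / r) {0..t}"
proof -
  have "((\<lambda>s. exp (r * s)) has_integral (exp (r * t) / r - exp (r * 0) / r)) {0..t}"
  proof (rule fundamental_theorem_of_calculus)
    fix x assume "x \<in> {0..t}"
    show "((\<lambda>s. exp (r * s) / r) has_vector_derivative exp (r * x)) (at x within {0..t})"
      using assms(1)
      by (auto intro!: derivative_eq_intros simp: has_real_derivative_iff_has_vector_derivative[symmetric])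
  qed (use assms(2) in auto)
  then show ?thesis by (simp add: diff_divide_distrib)
qed

lemma halving_bound:
  fixes w \<rho> :: "'a \<Rightarrow> real"
  assumes "0 \<le> a" "0 \<le> B" and \<rho>: "\<And>x. x \<in> S \<Longrightarrow> 0 \<le> \<rho> x"
    and init: "\<And>x. x \<in> S \<Longrightarrow> \<bar>w x\<bar> \<le> B * \<rho> x"
    and step: "\<And>K. 0 \<le> K \<Longrightarrow> \<forall>x\<in>S. \<bar>w x\<bar> \<le> K * \<rho> x \<Longrightarrow> \<forall>x\<in>S. \<bar>w x\<bar> \<le> (K / 2 + a) * \<rho> x"
    and x: "x \<in> S"
  shows "\<bar>w x\<bar> \<le> 2 * a * \<rho> x"
proof -
  have iter: "\<forall>x\<in>S. \<bar>w x\<bar> \<le> (B / 2 ^ n + 2 * a) * \<rho> x" for n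
  proof (induction n)
    case 0
    show ?case
    proof
      fix x assume "x \<in> S"
      then have "B * \<rho> x \<le> (B / 2 ^ 0 + 2 * a) * \<rho> x"
        using \<rho> \<open>0 \<le> a\<close> by (intro mult_right_mono) auto
      then show "\<bar>w x\<bar> \<le> (B / 2 ^ 0 + 2 * a) * \<rho> x"
        using init[OF \<open>x \<in> S\<close>] by linarith
    qed
  next
    case (Suc n)
    have "0 \<le> B / 2 ^ n + 2 * a" using assms(1,2) by simp
    moreover have "(B / 2 ^ n + 2 * a) / 2 + a = B / 2 ^ Suc n + 2 * a" by (simp add: field_simps)
    ultimately show ?case using step[OF _ Suc.IH] by metis
  qed
  have "(\<lambda>n. (B / 2 ^ n + 2 * a) * \<rho> x) \<longlonglongrightarrow> (0 + 2 * a) * \<rho> x"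
    by (intro tendsto_intros LIMSEQ_divide_realpow_zero) auto
  then show ?thesis
    using iter x by (intro LIMSEQ_le_const[where X="\<lambda>n. (B / 2 ^ n + 2 * a) * \<rho> x"]) auto
qed

locale bathtub =
  fixes T G xa xb L :: real and Td :: "real set" and V :: "real \<Rightarrow> real"
  assumes Td_borel [measurable]: "Td \<in> sets borel" and Td_subset: "Td \<subseteq> {0..T}"
    and G_nonneg: "0 \<le> G" and xa_le_xb: "xa \<le> xb"
    and V_lipschitz: "L-lipschitz_on {0..1} V" and T_nonneg: "0 \<le> T"
begin

text \<open>This is \<open>P\<^sub>m\<^sub>,\<^sub>G\<close> without its marginal constraint, which the argument never uses.\<close>
definition inflow :: "(real \<times> real) measure \<Rightarrow> bool" where
  "inflow F \<longleftrightarrow> prob_space F \<and> sets F = sets borel \<and> emeasure F (Td \<times> {xa..xb}) = 1 \<and>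
     (\<forall>B \<in> sets borel. B \<subseteq> Td \<times> {xa..xb} \<longrightarrow> emeasure F B \<le> ennreal G * emeasure lborel B)"

lemma inflowD:
  assumes "inflow F"
  shows "prob_space F" "sets F = sets borel" "measure F (Td \<times> {xa..xb}) = 1"
    and "\<And>B. B \<in> sets borel \<Longrightarrow> B \<subseteq> Td \<times> {xa..xb} \<Longrightarrow> emeasure F B \<le> ennreal G * emeasure lborel B"
  using assms by (auto simp: inflow_def finite_measure.emeasure_eq_measure prob_space_def)

lemma support_borel [measurable]: "Td \<times> {xa..xb} \<in> sets borel"
proof -
  have "Td \<times> {xa..xb} \<in> sets (borel \<Otimes>\<^sub>M borel)"
    by (rule pair_measureI) auto
  then show ?thesis by (simp only: borel_prod)
qed


lemma measure_inflow_Int_support: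
  assumes F: "inflow F" and B: "B \<in> sets borel"
  shows "measure F (B \<inter> (Td \<times> {xa..xb})) = measure F B"
proof -
  interpret prob_space F using inflowD(1)[OF F] .
  show ?thesis
    using B inflowD(2,3)[OF F] by (intro measure_space_inter) (auto simp: prob_space)
qed

lemma measure_inflow_le_strip:
  fixes l :: "real \<Rightarrow> real"
  assumes F: "inflow F" and B: "B \<in> sets borel" and ab: "a \<le> b" and d: "0 \<le> d"
    and strip: "B \<inter> (Td \<times> {xa..xb}) \<subseteq> {(\<tau>, \<xi>). a \<le> \<tau> \<and> \<tau> \<le> b \<and> l \<tau> \<le> \<xi> \<and> \<xi> \<le> l \<tau> + d}"
  shows "measure F B \<le> G * d * (b - a)"
proof -
  interpret prob_space F using inflowD(1)[OF F] .
  have BK: "B \<inter> (Td \<times> {xa..xb}) \<in> sets borel" using B by measurable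
  have "emeasure F (B \<inter> (Td \<times> {xa..xb})) \<le> ennreal G * emeasure lborel (B \<inter> (Td \<times> {xa..xb}))"
    using inflowD(4)[OF F BK] by simp
  also have "\<dots> \<le> ennreal G * ennreal (d * (b - a))"
    by (intro mult_left_mono emeasure_lborel_le_strip[OF BK ab d strip]) simp
  also have "\<dots> = ennreal (G * d * (b - a))"
    using G_nonneg d ab by (simp add: ennreal_mult mult.assoc)
  finally show ?thesis
    using measure_inflow_Int_support[OF F B] G_nonneg d ab
    by (simp add: emeasure_eq_measure ennreal_le_iff)
qed

definition region :: "real \<Rightarrow> (real \<Rightarrow> real) \<Rightarrow> (real \<times> real) set" where
  "region a c = {(\<tau>, \<xi>). \<tau> \<in> {0..a} \<inter> Td \<and> \<xi> \<in> {c \<tau><..} \<inter> {xa..xb}}"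

lemma region_borel [measurable]:
  assumes [measurable]: "c \<in> borel_measurable borel"
  shows "region a c \<in> sets borel"
proof -
  have "region a c = {x \<in> space (borel \<Otimes>\<^sub>M borel).
      fst x \<in> {0..a} \<and> fst x \<in> Td \<and> c (fst x) < snd x \<and> snd x \<in> {xa..xb}}"
    by (auto simp: region_def space_pair_measure)
  also have "\<dots> \<in> sets (borel \<Otimes>\<^sub>M borel)" by measurable
  finally show ?thesis by (simp only: borel_prod)
qed

lemma abs_measure_region_threshold_le:
  assumes F: "inflow F" and [measurable]: "c1 \<in> borel_measurable borel" "c2 \<in> borel_measurable borel"
    and a: "0 \<le> a" and \<delta>: "0 \<le> \<delta>" and close: "\<And>\<tau>. \<tau> \<in> {0..a} \<Longrightarrow> \<bar>c1 \<tau> - c2 \<tau>\<bar> \<le> \<delta>"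
  shows "\<bar>measure F (region a c1) - measure F (region a c2)\<bar> \<le> G * \<delta> * a"
proof -
  interpret prob_space F using inflowD(1)[OF F] .
  have diff_le: "measure F (region a c - region a c') \<le> G * \<delta> * (a - 0)"
    if [measurable]: "c \<in> borel_measurable borel" "c' \<in> borel_measurable borel"
      and close': "\<And>\<tau>. \<tau> \<in> {0..a} \<Longrightarrow> \<bar>c \<tau> - c' \<tau>\<bar> \<le> \<delta>" for c c'
  proof (rule measure_inflow_le_strip[OF F _ a \<delta>, where l="\<lambda>\<tau>. c' \<tau> - \<delta>"])
    show "region a c - region a c' \<in> sets borel" by measurable
    show "(region a c - region a c') \<inter> (Td \<times> {xa..xb})
        \<subseteq> {(\<tau>, \<xi>). 0 \<le> \<tau> \<and> \<tau> \<le> a \<and> c' \<tau> - \<delta> \<le> \<xi> \<and> \<xi> \<le> c' \<tau> - \<delta> + \<delta>}"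
      using close' by (fastforce simp: region_def abs_le_iff)
  qed
  have "measure F (region a c1 - region a c2) \<le> G * \<delta> * (a - 0)"
    using close by (intro diff_le) auto
  moreover have "measure F (region a c2 - region a c1) \<le> G * \<delta> * (a - 0)"
    using close by (intro diff_le) (auto simp: abs_minus_commute)
  ultimately show ?thesis
    using inflowD(2)[OF F] by (intro abs_measure_diff_le) auto
qed

lemma abs_measure_region_time_le:
  assumes F: "inflow F" and [measurable]: "c \<in> borel_measurable borel" and ab: "a \<le> b"
  shows "\<bar>measure F (region a c) - measure F (region b c)\<bar> \<le> G * (xb - xa) * (b - a)"
proof -
  interpret prob_space F using inflowD(1)[OF F] .
  have "region a c - region b c = {}" using ab by (auto simp: region_def)
  then have "measure F (region a c - region b c) \<le> G * (xb - xa) * (b - a)"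
    using G_nonneg xa_le_xb ab by (simp only: measure_empty) simp
  moreover have "measure F (region b c - region a c) \<le> G * (xb - xa) * (b - a)"
  proof (rule measure_inflow_le_strip[OF F _ ab, where l="\<lambda>_. xa"])
    show "region b c - region a c \<in> sets borel" by measurable
  qed (use xa_le_xb in \<open>auto simp: region_def\<close>)
  ultimately show ?thesis
    using inflowD(2)[OF F] by (intro abs_measure_diff_le) auto
qed


lemma measure_region_tendsto:
  assumes conv: "weak_conv_seq Fs F" and Fs: "\<And>k. inflow (Fs k)" and F: "inflow F"
    and [measurable]: "c \<in> borel_measurable borel" and c_cont: "continuous_on {..s} c"
    and s: "0 \<le> s"
  shows "(\<lambda>k. measure (Fs k) (region s c)) \<longlonglongrightarrow> measure F (region s c)"
proof -
  define A where "A = {x :: real \<times> real. fst x \<le> s \<and> c (fst x) < snd x}"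
  define C where "C = {x :: real \<times> real. fst x \<le> s \<and> c (fst x) \<le> snd x}"
  define U where "U = {x :: real \<times> real. fst x < s \<and> c (fst x) < snd x}"
  have A_borel: "A \<in> sets borel"
  proof -
    have "A = {x \<in> space (borel \<Otimes>\<^sub>M borel). fst x \<le> s \<and> c (fst x) < snd x}"
      by (simp add: A_def space_pair_measure)
    also have "\<dots> \<in> sets (borel \<Otimes>\<^sub>M borel)" by measurable
    finally show ?thesis by (simp only: borel_prod)
  qed
  have "closed C" "open U"
    unfolding C_def U_def using closed_supergraph[OF c_cont] open_strict_supergraph[OF c_cont] .
  moreover have "U \<subseteq> A" "A \<subseteq> C" by (auto simp: A_def C_def U_def)
  moreover have "measure F C \<le> measure F U"
  proof -
    interpret prob_space F using inflowD(1)[OF F] .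
    have C_borel: "C \<in> sets borel" and U_borel: "U \<in> sets borel"
      using \<open>closed C\<close> \<open>open U\<close> by (auto intro: borel_closed borel_open)
    have empty: "A - C = {}" "U - A = {}" by (auto simp: A_def C_def U_def)
    have "measure F (C - A) \<le> G * 0 * (s - 0)"
      by (rule measure_inflow_le_strip[OF F _ s order.refl, where l=c])
        (use A_borel C_borel Td_subset in \<open>auto simp: A_def C_def\<close>)
    then have "\<bar>measure F C - measure F A\<bar> \<le> 0"
      using A_borel C_borel inflowD(2)[OF F] by (intro abs_measure_diff_le) (auto simp: empty)
    moreover have "measure F (A - U) \<le> G * (xb - xa) * (s - s)"
      by (rule measure_inflow_le_strip[OF F _ order.refl, where l="\<lambda>_. xa"])
        (use A_borel U_borel xa_le_xb in \<open>auto simp: A_def U_def\<close>)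
    then have "\<bar>measure F A - measure F U\<bar> \<le> 0"
      using A_borel U_borel inflowD(2)[OF F] by (intro abs_measure_diff_le) (auto simp: empty)
    ultimately show ?thesis by linarith
  qed
  ultimately have "(\<lambda>k. measure (Fs k) A) \<longlonglongrightarrow> measure F A"
    using weak_conv_seq_measure_tendsto[OF conv inflowD(1,2)[OF Fs] inflowD(1,2)[OF F]] A_borel
    by blast
  moreover have "region s c = A \<inter> (Td \<times> {xa..xb})"
    using Td_subset by (auto simp: region_def A_def)
  ultimately show ?thesis
    using measure_inflow_Int_support[OF _ A_borel] Fs F by simp
qed


definition in_CT :: "(real \<Rightarrow> real) \<Rightarrow> bool" where
  "in_CT z \<longleftrightarrow> continuous_on {0..T} z \<and> (\<forall>t. t \<notin> {0..T} \<longrightarrow> z t = 0)"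

definition accum :: "(real \<times> real) measure \<Rightarrow> (real \<Rightarrow> real) \<Rightarrow> real \<Rightarrow> real" where
  "accum F z s = measure F (S_set Td {xa..xb} z s)"

definition Phi :: "(real \<times> real) measure \<Rightarrow> (real \<Rightarrow> real) \<Rightarrow> real \<Rightarrow> real" where
  "Phi F z t = (if t \<in> {0..T} then integral {0..t} (\<lambda>s. V (accum F z s)) else 0)"

lemma in_CT_borel_measurable [measurable_dest]:
  assumes "in_CT z" shows "z \<in> borel_measurable borel"
proof -
  have "(\<lambda>x. indicator {0..T} x *\<^sub>R z x) \<in> borel_measurable borel"
    using assms by (intro borel_measurable_continuous_on_indicator) (auto simp: in_CT_def)
  moreover have "(\<lambda>x. indicator {0..T} x *\<^sub>R z x) = z"
    using assms by (auto simp: in_CT_def indicator_def fun_eq_iff)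
  ultimately show ?thesis by simp
qed

lemma accum_eq_region: "accum F z s = measure F (region s (\<lambda>\<tau>. z s - z \<tau>))"
  by (simp add: accum_def S_set_def region_def)

lemma accum_nonneg: "0 \<le> accum F z s"
  by (simp add: accum_def)

lemma accum_le_1: "inflow F \<Longrightarrow> accum F z s \<le> 1"
  unfolding accum_def by (rule prob_space.prob_le_1[OF inflowD(1)])

lemma abs_accum_diff_le:
  assumes F: "inflow F" and z1: "in_CT z1" and z2: "in_CT z2" and s: "0 \<le> s" and K: "0 \<le> K"
    and close: "\<And>\<tau>. \<tau> \<in> {0..s} \<Longrightarrow> \<bar>z1 \<tau> - z2 \<tau>\<bar> \<le> K"
  shows "\<bar>accum F z1 s - accum F z2 s\<bar> \<le> G * (2 * K) * s"
  unfolding accum_eq_region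
proof (rule abs_measure_region_threshold_le[OF F _ _ s])
  fix \<tau> assume "\<tau> \<in> {0..s}"
  then show "\<bar>z1 s - z1 \<tau> - (z2 s - z2 \<tau>)\<bar> \<le> 2 * K"
    using close[of s] close[of \<tau>] s by auto
qed (use K z1 z2 in auto)

lemma abs_accum_time_diff_le:
  assumes F: "inflow F" and z: "in_CT z" and s: "s \<in> {0..T}" and s': "s' \<in> {0..T}"
  shows "\<bar>accum F z s' - accum F z s\<bar> \<le> G * \<bar>z s' - z s\<bar> * T + G * (xb - xa) * \<bar>s' - s\<bar>"
proof -
  have "\<bar>measure F (region s' (\<lambda>\<tau>. z s' - z \<tau>)) - measure F (region s' (\<lambda>\<tau>. z s - z \<tau>))\<bar>
      \<le> G * \<bar>z s' - z s\<bar> * s'"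
    using s' z by (intro abs_measure_region_threshold_le[OF F]) auto
  also have "\<dots> \<le> G * \<bar>z s' - z s\<bar> * T"
    using G_nonneg s' by (intro mult_left_mono) auto
  finally have threshold: "\<bar>measure F (region s' (\<lambda>\<tau>. z s' - z \<tau>)) - measure F (region s' (\<lambda>\<tau>. z s - z \<tau>))\<bar>
      \<le> G * \<bar>z s' - z s\<bar> * T" .
  have time: "\<bar>measure F (region s' (\<lambda>\<tau>. z s - z \<tau>)) - measure F (region s (\<lambda>\<tau>. z s - z \<tau>))\<bar>
      \<le> G * (xb - xa) * \<bar>s' - s\<bar>"
    using abs_measure_region_time_le[OF F, of "\<lambda>\<tau>. z s - z \<tau>" s s']
      abs_measure_region_time_le[OF F, of "\<lambda>\<tau>. z s - z \<tau>" s' s] z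
    by (cases "s' \<le> s") (auto simp: abs_minus_commute)
  show ?thesis
    using threshold time by (simp add: accum_eq_region)
qed

lemma continuous_on_accum:
  assumes F: "inflow F" and z: "in_CT z"
  shows "continuous_on {0..T} (accum F z)"
  unfolding continuous_on_def
proof
  fix s assume s: "s \<in> {0..T}"
  have "(z \<longlongrightarrow> z s) (at s within {0..T})"
    using z s by (auto simp: in_CT_def continuous_on_def)
  then have "((\<lambda>s'. G * \<bar>z s' - z s\<bar> * T + G * (xb - xa) * \<bar>s' - s\<bar>) \<longlongrightarrow> 0) (at s within {0..T})"
    by (auto intro!: tendsto_eq_intros)
  then have "((\<lambda>s'. accum F z s' - accum F z s) \<longlongrightarrow> 0) (at s within {0..T})"
    by (rule Lim_null_comparison[rotated])
      (use s abs_accum_time_diff_le[OF F z] in \<open>auto simp: eventually_at_filter\<close>)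
  then show "(accum F z \<longlongrightarrow> accum F z s) (at s within {0..T})"
    by (simp add: LIM_zero_iff)
qed

lemma abs_V_accum_le:
  assumes "inflow F" shows "\<bar>V (accum F z s)\<bar> \<le> \<bar>V 0\<bar> + L"
proof -
  have "dist (V (accum F z s)) (V 0) \<le> L * dist (accum F z s) 0"
    using assms accum_nonneg accum_le_1 by (intro lipschitz_onD[OF V_lipschitz]) auto
  also have "\<dots> \<le> L"
    using assms accum_nonneg accum_le_1 lipschitz_on_nonneg[OF V_lipschitz]
    by (simp add: mult_left_le)
  finally show ?thesis by (simp add: dist_real_def)
qed

lemma integrable_V_accum:
  assumes F: "inflow F" and z: "in_CT z" and t: "t \<le> T"
  shows "(\<lambda>s. V (accum F z s)) integrable_on {0..t}"
proof (rule integrable_continuous_interval)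
  have "continuous_on {0..T} (\<lambda>s. V (accum F z s))"
    using accum_nonneg accum_le_1[OF F]
    by (intro continuous_on_compose2[OF lipschitz_on_continuous_on[OF V_lipschitz]]
        continuous_on_accum[OF F z]) auto
  then show "continuous_on {0..t} (\<lambda>s. V (accum F z s))"
    by (rule continuous_on_subset) (use t in auto)
qed

lemma in_CT_Phi:
  assumes F: "inflow F" and z: "in_CT z"
  shows "in_CT (Phi F z)"
proof -
  have "continuous_on {0..T} (\<lambda>t. integral {0..t} (\<lambda>s. V (accum F z s)))"
    by (rule indefinite_integral_continuous_1) (rule integrable_V_accum[OF F z order.refl])
  then show ?thesis
    unfolding in_CT_def Phi_def by (auto elim: continuous_on_eq)
qed

lemma abs_Phi_le:
  assumes F: "inflow F" and z: "in_CT z"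
  shows "\<bar>Phi F z t\<bar> \<le> T * (\<bar>V 0\<bar> + L)"
proof (cases "t \<in> {0..T}")
  case True
  have "norm (integral {0..t} (\<lambda>s. V (accum F z s))) \<le> integral {0..t} (\<lambda>_. \<bar>V 0\<bar> + L)"
    using True abs_V_accum_le[OF F]
    by (intro integral_norm_bound_integral integrable_V_accum[OF F z]) auto
  also have "\<dots> \<le> T * (\<bar>V 0\<bar> + L)"
    using True lipschitz_on_nonneg[OF V_lipschitz] by (auto intro: mult_right_mono)
  finally show ?thesis using True by (simp add: Phi_def)
next
  case False
  then have "Phi F z t = 0" unfolding Phi_def by (simp only: if_False)
  then show ?thesis
    using T_nonneg lipschitz_on_nonneg[OF V_lipschitz] by simp
qed


lemma integrable_accum_diff:
  assumes "inflow F1" "inflow F2" "in_CT z1" "in_CT z2" "t \<le> T"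
  shows "(\<lambda>s. L * \<bar>accum F1 z1 s - accum F2 z2 s\<bar>) integrable_on {0..t}"
proof (rule integrable_continuous_interval)
  have "continuous_on {0..T} (\<lambda>s. L * \<bar>accum F1 z1 s - accum F2 z2 s\<bar>)"
    using assms by (intro continuous_intros continuous_on_accum)
  then show "continuous_on {0..t} (\<lambda>s. L * \<bar>accum F1 z1 s - accum F2 z2 s\<bar>)"
    by (rule continuous_on_subset) (use assms in auto)
qed

lemma abs_Phi_diff_le:
  assumes F1: "inflow F1" and F2: "inflow F2" and z1: "in_CT z1" and z2: "in_CT z2"
    and t: "t \<in> {0..T}"
  shows "\<bar>Phi F1 z1 t - Phi F2 z2 t\<bar> \<le> integral {0..t} (\<lambda>s. L * \<bar>accum F1 z1 s - accum F2 z2 s\<bar>)"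
proof -
  have tT: "t \<le> T" using t by simp
  have "Phi F1 z1 t - Phi F2 z2 t = integral {0..t} (\<lambda>s. V (accum F1 z1 s) - V (accum F2 z2 s))"
    using t by (simp add: Phi_def integral_diff integrable_V_accum[OF F1 z1 tT] integrable_V_accum[OF F2 z2 tT])
  also have "norm \<dots> \<le> integral {0..t} (\<lambda>s. L * \<bar>accum F1 z1 s - accum F2 z2 s\<bar>)"
  proof (rule integral_norm_bound_integral)
    show "(\<lambda>s. V (accum F1 z1 s) - V (accum F2 z2 s)) integrable_on {0..t}"
      by (intro integrable_diff integrable_V_accum[OF F1 z1 tT] integrable_V_accum[OF F2 z2 tT])
    show "(\<lambda>s. L * \<bar>accum F1 z1 s - accum F2 z2 s\<bar>) integrable_on {0..t}"
      by (rule integrable_accum_diff[OF F1 F2 z1 z2 tT])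
    fix s
    have "dist (V (accum F1 z1 s)) (V (accum F2 z2 s)) \<le> L * dist (accum F1 z1 s) (accum F2 z2 s)"
      using accum_nonneg accum_le_1[OF F1] accum_le_1[OF F2]
      by (intro lipschitz_onD[OF V_lipschitz]) auto
    then show "norm (V (accum F1 z1 s) - V (accum F2 z2 s)) \<le> L * \<bar>accum F1 z1 s - accum F2 z2 s\<bar>"
      by (simp add: dist_real_def)
  qed
  finally show ?thesis by simp
qed

text \<open>The rate of the Bielecki weight \<open>exp (lam * t)\<close>, chosen so large that \<open>Phi F\<close>
  halves distances measured in the weighted supremum norm.\<close>
definition lam :: real where "lam = 4 * L * G * T + 1"

lemma lam_pos: "0 < lam"
  using lipschitz_on_nonneg[OF V_lipschitz] G_nonneg T_nonneg by (simp add: lam_def add_nonneg_pos)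

lemma integral_accum_diff_le_exp:
  assumes F: "inflow F" and z1: "in_CT z1" and z2: "in_CT z2" and K: "0 \<le> K"
    and close: "\<And>\<tau>. \<tau> \<in> {0..T} \<Longrightarrow> \<bar>z1 \<tau> - z2 \<tau>\<bar> \<le> K * exp (lam * \<tau>)"
    and t: "t \<in> {0..T}"
  shows "integral {0..t} (\<lambda>s. L * \<bar>accum F z1 s - accum F z2 s\<bar>) \<le> K / 2 * exp (lam * t)"
proof -
  define c where "c = 2 * L * G * T * K"
  have L: "0 \<le> L" by (rule lipschitz_on_nonneg[OF V_lipschitz])
  have pointwise: "L * \<bar>accum F z1 s - accum F z2 s\<bar> \<le> c * exp (lam * s)" if s: "s \<in> {0..t}" for s
  proof -
    have "\<bar>accum F z1 s - accum F z2 s\<bar> \<le> G * (2 * (K * exp (lam * s))) * s"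
    proof (rule abs_accum_diff_le[OF F z1 z2])
      fix \<tau> assume "\<tau> \<in> {0..s}"
      then have "\<bar>z1 \<tau> - z2 \<tau>\<bar> \<le> K * exp (lam * \<tau>)" "exp (lam * \<tau>) \<le> exp (lam * s)"
        using close s t lam_pos by auto
      then show "\<bar>z1 \<tau> - z2 \<tau>\<bar> \<le> K * exp (lam * s)"
        using K by (meson mult_left_mono order.trans)
    qed (use s K in auto)
    also have "\<dots> \<le> G * (2 * (K * exp (lam * s))) * T"
      using G_nonneg K s t by (intro mult_left_mono) auto
    finally show ?thesis
      using L by (auto simp: c_def algebra_simps intro: order.trans[OF mult_left_mono])
  qed
  have exp_integral: "((\<lambda>s. c * exp (lam * s)) has_integral c * ((exp (lam * t) - 1) / lam)) {0..t}"
    using lam_pos t by (intro has_integral_mult_right has_integral_exp_scaled) auto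
  have "integral {0..t} (\<lambda>s. L * \<bar>accum F z1 s - accum F z2 s\<bar>) \<le> c * ((exp (lam * t) - 1) / lam)"
  proof (rule has_integral_le[OF integrable_integral exp_integral])
    show "(\<lambda>s. L * \<bar>accum F z1 s - accum F z2 s\<bar>) integrable_on {0..t}"
      using t by (intro integrable_accum_diff[OF F F z1 z2]) auto
  qed (rule pointwise)
  also have "\<dots> \<le> c / lam * exp (lam * t)"
    using L G_nonneg T_nonneg K lam_pos by (simp add: c_def field_simps)
  also have "\<dots> \<le> K / 2 * exp (lam * t)"
  proof -
    have "c \<le> K / 2 * lam" using K unfolding c_def lam_def by (simp add: algebra_simps)
    then show ?thesis using lam_pos by (simp add: field_simps)
  qed
  finally show ?thesis .
qed

lemma abs_Phi_diff_le_exp: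
  assumes F1: "inflow F1" and F2: "inflow F2" and z1: "in_CT z1" and z2: "in_CT z2" and K: "0 \<le> K"
    and close: "\<And>\<tau>. \<tau> \<in> {0..T} \<Longrightarrow> \<bar>z1 \<tau> - z2 \<tau>\<bar> \<le> K * exp (lam * \<tau>)"
    and t: "t \<in> {0..T}"
  shows "\<bar>Phi F1 z1 t - Phi F2 z2 t\<bar>
    \<le> K / 2 * exp (lam * t) + integral {0..t} (\<lambda>s. L * \<bar>accum F1 z2 s - accum F2 z2 s\<bar>)"
proof -
  have tT: "t \<le> T" using t by simp
  have "\<bar>Phi F1 z1 t - Phi F2 z2 t\<bar> \<le> integral {0..t} (\<lambda>s. L * \<bar>accum F1 z1 s - accum F2 z2 s\<bar>)"
    by (rule abs_Phi_diff_le[OF F1 F2 z1 z2 t])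
  also have "\<dots> \<le> integral {0..t} (\<lambda>s. L * \<bar>accum F1 z1 s - accum F1 z2 s\<bar> + L * \<bar>accum F1 z2 s - accum F2 z2 s\<bar>)"
    using lipschitz_on_nonneg[OF V_lipschitz]
    by (intro integral_le integrable_add integrable_accum_diff F1 F2 z1 z2 tT)
      (simp add: distrib_left[symmetric] mult_left_mono)
  also have "\<dots> = integral {0..t} (\<lambda>s. L * \<bar>accum F1 z1 s - accum F1 z2 s\<bar>)
      + integral {0..t} (\<lambda>s. L * \<bar>accum F1 z2 s - accum F2 z2 s\<bar>)"
    by (intro integral_add integrable_accum_diff F1 F2 z1 z2 tT)
  also have "\<dots> \<le> K / 2 * exp (lam * t) + integral {0..t} (\<lambda>s. L * \<bar>accum F1 z2 s - accum F2 z2 s\<bar>)"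
    using integral_accum_diff_le_exp[OF F1 z1 z2 K close t] by simp
  finally show ?thesis .
qed


definition solution :: "(real \<times> real) measure \<Rightarrow> (real \<Rightarrow> real) \<Rightarrow> bool" where
  "solution F z \<longleftrightarrow> continuous_on {0..T} z \<and> (\<forall>t. t \<notin> {0..T} \<longrightarrow> z t = 0) \<and>
     (\<forall>t \<in> {0..T}. ((\<lambda>s. V (measure F (S_set Td {xa..xb} z s))) has_integral z t) {0..t})"

lemma z_sol_eq_The: "z_sol T Td {xa..xb} V F = (THE z. solution F z)"
  by (simp add: z_sol_def solution_def)

lemma solution_iff_fixpoint:
  assumes F: "inflow F"
  shows "solution F z \<longleftrightarrow> in_CT z \<and> (\<forall>t\<in>{0..T}. Phi F z t = z t)"
proof -
  have "((\<lambda>s. V (accum F z s)) has_integral z t) {0..t} \<longleftrightarrow> Phi F z t = z t"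
    if "in_CT z" "t \<in> {0..T}" for t
    using that integrable_V_accum[OF F] by (auto simp: Phi_def has_integral_integrable_integral)
  then show ?thesis
    unfolding solution_def accum_def[symmetric] by (auto simp: in_CT_def)
qed

lemma solution_abs_le:
  assumes F: "inflow F" and z: "solution F z"
  shows "\<bar>z t\<bar> \<le> T * (\<bar>V 0\<bar> + L)"
  using abs_Phi_le[OF F, of z t] z T_nonneg lipschitz_on_nonneg[OF V_lipschitz]
  by (cases "t \<in> {0..T}") (auto simp: solution_iff_fixpoint[OF F] in_CT_def)

lemma solution_stability:
  assumes F1: "inflow F1" and F2: "inflow F2" and z1: "solution F1 z1" and z2: "solution F2 z2"
    and t: "t \<in> {0..T}"
  shows "\<bar>z1 t - z2 t\<bar> \<le> 2 * integral {0..T} (\<lambda>s. L * \<bar>accum F1 z2 s - accum F2 z2 s\<bar>) * exp (lam * t)"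
proof -
  define gap where "gap = integral {0..T} (\<lambda>s. L * \<bar>accum F1 z2 s - accum F2 z2 s\<bar>)"
  have CT: "in_CT z1" "in_CT z2" and fix1: "\<And>\<tau>. \<tau> \<in> {0..T} \<Longrightarrow> Phi F1 z1 \<tau> = z1 \<tau>"
    and fix2: "\<And>\<tau>. \<tau> \<in> {0..T} \<Longrightarrow> Phi F2 z2 \<tau> = z2 \<tau>"
    using z1 z2 by (auto simp: solution_iff_fixpoint[OF F1] solution_iff_fixpoint[OF F2])
  have integrand_nonneg: "0 \<le> L * \<bar>accum F1 z2 s - accum F2 z2 s\<bar>" for s
    using lipschitz_on_nonneg[OF V_lipschitz] by simp
  have integrable: "(\<lambda>s. L * \<bar>accum F1 z2 s - accum F2 z2 s\<bar>) integrable_on {0..\<tau>}" if "\<tau> \<le> T" for \<tau>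
    using integrable_accum_diff[OF F1 F2 CT(2) CT(2) that] .
  have gap_nonneg: "0 \<le> integral {0..\<tau>} (\<lambda>s. L * \<bar>accum F1 z2 s - accum F2 z2 s\<bar>)"
    if "\<tau> \<in> {0..T}" for \<tau>
    by (rule integral_nonneg) (use that integrable integrand_nonneg in auto)
  have gap_le: "integral {0..\<tau>} (\<lambda>s. L * \<bar>accum F1 z2 s - accum F2 z2 s\<bar>) \<le> gap"
    if "\<tau> \<in> {0..T}" for \<tau>
    unfolding gap_def by (rule integral_subset_le) (use that integrable integrand_nonneg in auto)
  have gap: "0 \<le> gap" using gap_nonneg[of T] T_nonneg by (simp add: gap_def)
  show ?thesis
    unfolding gap_def[symmetric]
  proof (rule halving_bound[where S="{0..T}" and w="\<lambda>\<tau>. z1 \<tau> - z2 \<tau>"])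
    show "0 \<le> gap" by (rule gap)
    show "0 \<le> 2 * (T * (\<bar>V 0\<bar> + L))"
      using T_nonneg lipschitz_on_nonneg[OF V_lipschitz] by simp
    fix \<tau> assume \<tau>: "\<tau> \<in> {0..T}"
    have "\<bar>z1 \<tau> - z2 \<tau>\<bar> \<le> 2 * (T * (\<bar>V 0\<bar> + L)) * 1"
      using solution_abs_le[OF F1 z1, of \<tau>] solution_abs_le[OF F2 z2, of \<tau>] by linarith
    also have "\<dots> \<le> 2 * (T * (\<bar>V 0\<bar> + L)) * exp (lam * \<tau>)"
      using \<tau> lam_pos T_nonneg lipschitz_on_nonneg[OF V_lipschitz] by (intro mult_left_mono) auto
    finally show "\<bar>z1 \<tau> - z2 \<tau>\<bar> \<le> 2 * (T * (\<bar>V 0\<bar> + L)) * exp (lam * \<tau>)" .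
  next
    fix K :: real assume K: "0 \<le> K" and close: "\<forall>\<tau>\<in>{0..T}. \<bar>z1 \<tau> - z2 \<tau>\<bar> \<le> K * exp (lam * \<tau>)"
    show "\<forall>\<tau>\<in>{0..T}. \<bar>z1 \<tau> - z2 \<tau>\<bar> \<le> (K / 2 + gap) * exp (lam * \<tau>)"
    proof
      fix \<tau> assume \<tau>: "\<tau> \<in> {0..T}"
      have "\<bar>z1 \<tau> - z2 \<tau>\<bar> \<le> K / 2 * exp (lam * \<tau>) + gap"
        using abs_Phi_diff_le_exp[OF F1 F2 CT K _ \<tau>] close gap_le[OF \<tau>] fix1[OF \<tau>] fix2[OF \<tau>]
        by fastforce
      also have "\<dots> \<le> (K / 2 + gap) * exp (lam * \<tau>)"
        using mult_right_mono[of 1 "exp (lam * \<tau>)" gap] \<tau> lam_pos gap by (simp add: distrib_right mult.commute)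
      finally show "\<bar>z1 \<tau> - z2 \<tau>\<bar> \<le> (K / 2 + gap) * exp (lam * \<tau>)" .
    qed
  qed (use t in auto)
qed

lemma solution_unique:
  assumes F: "inflow F" and z1: "solution F z1" and z2: "solution F z2"
  shows "z1 = z2"
proof
  fix t
  show "z1 t = z2 t"
  proof (cases "t \<in> {0..T}")
    case True
    then show ?thesis using solution_stability[OF F F z1 z2 True] by simp
  next
    case False
    then show ?thesis using z1 z2 by (simp add: solution_def)
  qed
qed


definition picard :: "(real \<times> real) measure \<Rightarrow> nat \<Rightarrow> real \<Rightarrow> real" where
  "picard F n = (Phi F ^^ n) (\<lambda>_. 0)"

lemma in_CT_picard:
  assumes F: "inflow F" shows "in_CT (picard F n)"
proof (induction n)
  case 0
  show ?case by (simp add: picard_def in_CT_def)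
next
  case (Suc n)
  then show ?case using in_CT_Phi[OF F] by (simp add: picard_def)
qed

lemma picard_step_le:
  assumes F: "inflow F" and \<tau>: "\<tau> \<in> {0..T}"
  shows "\<bar>picard F (Suc n) \<tau> - picard F n \<tau>\<bar> \<le> T * (\<bar>V 0\<bar> + L) / 2 ^ n * exp (lam * \<tau>)"
  using \<tau>
proof (induction n arbitrary: \<tau>)
  case 0
  have "\<bar>picard F (Suc 0) \<tau> - picard F 0 \<tau>\<bar> = \<bar>Phi F (picard F 0) \<tau>\<bar>"
    by (simp add: picard_def)
  also have "\<dots> \<le> T * (\<bar>V 0\<bar> + L) * 1"
    using abs_Phi_le[OF F in_CT_picard[OF F]] by simp
  also have "\<dots> \<le> T * (\<bar>V 0\<bar> + L) * exp (lam * \<tau>)"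
    using lam_pos 0 T_nonneg lipschitz_on_nonneg[OF V_lipschitz] by (intro mult_left_mono) auto
  finally show ?case by simp
next
  case (Suc n)
  have "\<bar>Phi F (picard F (Suc n)) \<tau> - Phi F (picard F n) \<tau>\<bar> \<le> T * (\<bar>V 0\<bar> + L) / 2 ^ n / 2 * exp (lam * \<tau>)"
    using abs_Phi_diff_le_exp[OF F F in_CT_picard[OF F] in_CT_picard[OF F] _ Suc.IH Suc.prems]
      T_nonneg lipschitz_on_nonneg[OF V_lipschitz] by simp
  then show ?case by (simp add: picard_def)
qed

lemma picard_uniform_limit:
  assumes F: "inflow F"
  obtains z where "in_CT z" "uniform_limit {0..T} (picard F) z sequentially"
proof -
  define M where "M n = T * (\<bar>V 0\<bar> + L) * exp (lam * T) * (1 / 2) ^ n" for n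
  have "norm (picard F (Suc n) x - picard F n x) \<le> M n" if x: "x \<in> {0..T}" for n x
  proof -
    have "\<bar>picard F (Suc n) x - picard F n x\<bar> \<le> T * (\<bar>V 0\<bar> + L) / 2 ^ n * exp (lam * x)"
      by (rule picard_step_le[OF F x])
    also have "\<dots> \<le> T * (\<bar>V 0\<bar> + L) / 2 ^ n * exp (lam * T)"
      using x lam_pos T_nonneg lipschitz_on_nonneg[OF V_lipschitz] by (intro mult_left_mono) auto
    finally show ?thesis by (simp add: M_def power_one_over field_simps)
  qed
  moreover have "summable M"
    unfolding M_def by (intro summable_mult summable_geometric) simp
  ultimately have "uniform_limit {0..T} (\<lambda>n x. \<Sum>i<n. picard F (Suc i) x - picard F i x)
      (\<lambda>x. \<Sum>i. picard F (Suc i) x - picard F i x) sequentially"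
    by (rule Weierstrass_m_test)
  moreover have "(\<Sum>i<n. picard F (Suc i) x - picard F i x) = picard F n x" for n x
    using sum_lessThan_telescope[of "\<lambda>i. picard F i x" n] by (simp add: picard_def)
  ultimately have "uniform_limit {0..T} (picard F) (\<lambda>x. \<Sum>i. picard F (Suc i) x - picard F i x) sequentially"
    by simp
  then have limit: "uniform_limit {0..T} (picard F)
      (\<lambda>x. if x \<in> {0..T} then \<Sum>i. picard F (Suc i) x - picard F i x else 0) sequentially"
    by (rule uniform_limit_cong'[THEN iffD1, rotated -1]) auto
  moreover have "continuous_on {0..T} (\<lambda>x. if x \<in> {0..T} then \<Sum>i. picard F (Suc i) x - picard F i x else 0)"
    using in_CT_picard[OF F]
    by (intro uniform_limit_theorem[OF _ limit]) (auto simp: in_CT_def intro: always_eventually)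
  ultimately show ?thesis
    by (intro that) (auto simp: in_CT_def)
qed

lemma solution_exists:
  assumes F: "inflow F"
  obtains z where "solution F z"
proof -
  obtain z where z: "in_CT z" and limit: "uniform_limit {0..T} (picard F) z sequentially"
    using picard_uniform_limit[OF F] by blast
  have "Phi F z t = z t" if t: "t \<in> {0..T}" for t
  proof (rule LIMSEQ_unique)
    show "(\<lambda>n. picard F (Suc n) t) \<longlonglongrightarrow> z t"
      using tendsto_uniform_limitI[OF limit t] by (rule LIMSEQ_Suc)
    show "(\<lambda>n. picard F (Suc n) t) \<longlonglongrightarrow> Phi F z t"
      unfolding tendsto_iff
    proof (intro allI impI)
      fix e :: real assume e: "0 < e"
      define e' where "e' = e / exp (lam * T)"
      have e': "0 < e'" using e by (simp add: e'_def)
      show "\<forall>\<^sub>F n in sequentially. dist (picard F (Suc n) t) (Phi F z t) < e"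
        using uniform_limitD[OF limit e']
      proof eventually_elim
        case (elim n)
        have "\<bar>picard F n \<tau> - z \<tau>\<bar> \<le> e' * exp (lam * \<tau>)" if \<tau>: "\<tau> \<in> {0..T}" for \<tau>
        proof -
          have "\<bar>picard F n \<tau> - z \<tau>\<bar> < e'"
            using elim \<tau> by (simp add: dist_real_def)
          then have "\<bar>picard F n \<tau> - z \<tau>\<bar> \<le> e' * 1" by simp
          also have "\<dots> \<le> e' * exp (lam * \<tau>)"
            using e' lam_pos \<tau> by (intro mult_left_mono) auto
          finally show ?thesis .
        qed
        then have "\<bar>Phi F (picard F n) t - Phi F z t\<bar> \<le> e' / 2 * exp (lam * t)"
          using abs_Phi_diff_le_exp[OF F F in_CT_picard[OF F] z _ _ t] e' by simp
        also have "\<dots> \<le> e' / 2 * exp (lam * T)" using e' lam_pos t by simp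
        also have "\<dots> < e" using e by (simp add: e'_def)
        finally show ?case by (simp add: dist_real_def picard_def)
      qed
    qed
  qed
  then show ?thesis
    using z that[of z] by (simp add: solution_iff_fixpoint[OF F])
qed

lemma solution_z_sol:
  assumes F: "inflow F"
  shows "solution F (z_sol T Td {xa..xb} V F)"
proof -
  obtain z where "solution F z" using solution_exists[OF F] .
  then have "\<exists>!z. solution F z" using solution_unique[OF F] by blast
  then show ?thesis unfolding z_sol_eq_The by (rule theI')
qed


lemma solution_continuous_on_atMost:
  assumes F: "inflow F" and z: "solution F z"
  shows "continuous_on {..T} z"
proof -
  have "z 0 = Phi F z 0"
    using z T_nonneg by (simp add: solution_iff_fixpoint[OF F])
  also have "\<dots> = 0"
    using T_nonneg by (simp add: Phi_def)
  finally have "\<forall>x\<in>{..0}. z x = 0"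
    using z by (auto simp: solution_def less_eq_real_def)
  then have "continuous_on {..0} z"
    by (intro continuous_on_eq[OF continuous_on_const[of _ 0]]) auto
  moreover have "continuous_on {0..T} z"
    using z by (simp add: solution_def)
  ultimately have "continuous_on ({..0} \<union> {0..T}) z"
    by (intro continuous_on_closed_Un) auto
  moreover have "{..0} \<union> {0..T} = {..T}" using T_nonneg by auto
  ultimately show ?thesis by simp
qed

lemma accum_tendsto:
  assumes conv: "weak_conv_seq Fs F" and Fs: "\<And>k. inflow (Fs k)" and F: "inflow F"
    and z: "solution F z" and s: "s \<in> {0..T}"
  shows "(\<lambda>k. accum (Fs k) z s) \<longlonglongrightarrow> accum F z s"
  unfolding accum_eq_region
proof (rule measure_region_tendsto[OF conv Fs F])
  have "in_CT z" using z by (simp add: solution_iff_fixpoint[OF F])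
  then show "(\<lambda>\<tau>. z s - z \<tau>) \<in> borel_measurable borel" by measurable
  show "continuous_on {..s} (\<lambda>\<tau>. z s - z \<tau>)"
    using s by (intro continuous_intros continuous_on_subset[OF solution_continuous_on_atMost[OF F z]]) auto
qed (use s in simp)

lemma integral_accum_diff_tendsto_0:
  assumes conv: "weak_conv_seq Fs F" and Fs: "\<And>k. inflow (Fs k)" and F: "inflow F"
    and z: "solution F z"
  shows "(\<lambda>k. integral {0..T} (\<lambda>s. L * \<bar>accum (Fs k) z s - accum F z s\<bar>)) \<longlonglongrightarrow> 0"
proof -
  have CT: "in_CT z" using z by (simp add: solution_iff_fixpoint[OF F])
  have L: "0 \<le> L" by (rule lipschitz_on_nonneg[OF V_lipschitz])
  have "(\<lambda>k. integral {0..T} (\<lambda>s. L * \<bar>accum (Fs k) z s - accum F z s\<bar>)) \<longlonglongrightarrow> integral {0..T} (\<lambda>_. 0)"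
  proof (rule dominated_convergence(2)[where h="\<lambda>_. L"])
    fix k s
    have "\<bar>accum (Fs k) z s - accum F z s\<bar> \<le> 1"
      using accum_nonneg[of "Fs k" z s] accum_nonneg[of F z s]
        accum_le_1[OF Fs, of k z s] accum_le_1[OF F, of z s]
      by (simp add: abs_le_iff)
    then show "norm (L * \<bar>accum (Fs k) z s - accum F z s\<bar>) \<le> L"
      using L by (simp add: abs_mult mult_left_le)
  next
    fix s assume "s \<in> {0..T}"
    then show "(\<lambda>k. L * \<bar>accum (Fs k) z s - accum F z s\<bar>) \<longlonglongrightarrow> 0"
      using tendsto_mult_left[OF tendsto_rabs[OF LIM_zero[OF accum_tendsto[OF conv Fs F z]]], of s L]
      by simp
  qed (use integrable_accum_diff[OF Fs F CT CT order.refl] in auto)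
  then show ?thesis by simp
qed

lemma z_sol_uniform_limit:
  assumes conv: "weak_conv_seq Fs F" and Fs: "\<And>k. inflow (Fs k)" and F: "inflow F"
  shows "uniform_limit {0..T} (\<lambda>k. z_sol T Td {xa..xb} V (Fs k)) (z_sol T Td {xa..xb} V F) sequentially"
proof -
  define z where "z = z_sol T Td {xa..xb} V F"
  define gap where "gap k = integral {0..T} (\<lambda>s. L * \<bar>accum (Fs k) z s - accum F z s\<bar>)" for k
  have z: "solution F z" unfolding z_def by (rule solution_z_sol[OF F])
  have "gap \<longlonglongrightarrow> 0"
    unfolding gap_def by (rule integral_accum_diff_tendsto_0[OF conv Fs F z])
  then have gap_limit: "(\<lambda>k. 2 * gap k * exp (lam * T)) \<longlonglongrightarrow> 0"
    by (auto intro: tendsto_eq_intros)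
  have bound: "\<bar>z_sol T Td {xa..xb} V (Fs k) t - z t\<bar> \<le> 2 * gap k * exp (lam * T)"
    if t: "t \<in> {0..T}" for k t
  proof -
    have "0 \<le> gap k"
      unfolding gap_def using lipschitz_on_nonneg[OF V_lipschitz] z
      by (intro integral_nonneg integrable_accum_diff[OF Fs F _ _ order.refl])
        (auto simp: solution_iff_fixpoint[OF F])
    then have "2 * gap k * exp (lam * t) \<le> 2 * gap k * exp (lam * T)"
      using t lam_pos by (intro mult_left_mono) auto
    moreover have "\<bar>z_sol T Td {xa..xb} V (Fs k) t - z t\<bar> \<le> 2 * gap k * exp (lam * t)"
      unfolding gap_def by (rule solution_stability[OF Fs F solution_z_sol[OF Fs] z t])
    ultimately show ?thesis by linarith
  qed
  show ?thesis
    unfolding z_def[symmetric]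
  proof (rule uniform_limitI)
    fix e :: real assume "0 < e"
    with gap_limit have "eventually (\<lambda>k. 2 * gap k * exp (lam * T) < e) sequentially"
      by (rule order_tendstoD(2))
    then show "eventually (\<lambda>k. \<forall>t\<in>{0..T}. dist (z_sol T Td {xa..xb} V (Fs k) t) (z t) < e) sequentially"
    proof eventually_elim
      case (elim k)
      show ?case
      proof
        fix t assume "t \<in> {0..T}"
        then show "dist (z_sol T Td {xa..xb} V (Fs k) t) (z t) < e"
          using bound[of t k] elim by (simp add: dist_real_def)
      qed
    qed
  qed
qed

end

theorem corollary2:
  fixes Tmax Xmin Xmax G :: real
    and Td Ta :: "real set"
    and m :: "(real \<times> real) measure"
    and V :: "real \<Rightarrow> real"
    and Es :: "nat \<Rightarrow> (real \<times> real \<times> real) measure"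
    and E :: "(real \<times> real \<times> real) measure"
  assumes "compact Td" "Td \<subseteq> {0..Tmax}"
    and "compact Ta" "Ta \<subseteq> {0..Tmax}"
    and "0 \<le> Xmin" "Xmin < Xmax"
    and "prob_space m" "sets m = sets borel" "emeasure m ({Xmin..Xmax} \<times> Ta) = 1"
    and "0 < G"
    and "\<forall>x \<ge> 0. V x \<ge> 0"
    and "\<forall>x y. 0 \<le> x \<longrightarrow> x < y \<longrightarrow> V y < V x"
    and "\<exists>L. L-lipschitz_on {0..} V"
    and "\<forall>k. Es k \<in> M_mG Td {Xmin..Xmax} Ta m G"
    and "E \<in> M_mG Td {Xmin..Xmax} Ta m G"
    and "weak_conv_seq Es E"
  shows "uniform_limit {0..Tmax}
           (\<lambda>k. z_sol Tmax Td {Xmin..Xmax} V (inflow_marg (Es k)))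
           (z_sol Tmax Td {Xmin..Xmax} V (inflow_marg E)) sequentially"
proof -
  obtain L where L: "L-lipschitz_on {0..} V" using assms(13) by blast
  have "Td \<noteq> {}"
    using assms(15) by (auto simp: M_mG_def)
  then have "0 \<le> Tmax" using assms(2) by auto
  moreover have "Td \<in> sets borel"
    using assms(1) by (intro borel_closed compact_imp_closed)
  moreover have "L-lipschitz_on {0..1} V"
    using L by (rule lipschitz_on_subset) auto
  ultimately interpret bathtub Tmax G Xmin Xmax L Td V
    using assms(2,6,10) by unfold_locales auto
  have "inflow (inflow_marg E)" "\<And>k. inflow (inflow_marg (Es k))"
    using assms(14,15) by (auto simp: M_mG_def P_mG_def inflow_def)
  moreover have "weak_conv_seq (\<lambda>k. inflow_marg (Es k)) (inflow_marg E)"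
    unfolding inflow_marg_def
    using assms(14,15,16)
    by (intro weak_conv_seq_distr) (auto simp: M_mG_def case_prod_beta intro!: continuous_intros)
  ultimately show ?thesis
    by (intro z_sol_uniform_limit)
qed

end
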